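(* Let $A$ be a binary matrix that has an optimal binary decomposition $A=U\cdot V$ such that every row of $V$ is a row of $A$. If, in addition, $A$ has the Unique base rows sums property, then the set of columns of $U$ spans (in the binary sense) every binary base of $A$, and consequently $A$ has the Augmentation property for the binary rank.
   Context: For a binary $n\times m$ matrix $A$, the binary rank $R_{binary}(A)$ is the least $k$ with $A=UV$, $U\in\{0,1\}^{n\times k}$, $V\in\{0,1\}^{k\times m}$, ordinary arithmetic; such a decomposition with $k=R_{binary}(A)$ is an optimal binary decomposition. A set $X$ of $\{0,1\}$-vectors spans a vector $y$ (binary sense) if $y=\sum_{x\in X}c_x x$ with $c_x\in\{0,1\}$ and ordinary addition; it spans a set $Y$ if it spans each vector of $Y$. A binary base of $A$ is a set of $\{0,1\}$ column vectors spanning all columns of $A$ of minimum cardinality among such spanning sets. $A$ has the Unique base rows sums property if for every optimal binary decomposition $A=X\cdot Y$, there are no two disjoint nonempty sets of row indices $\{i_1,\dots,i_s\}$, $\{j_1,\dots,j_t\}$ of $Y$ with $y_{i_1}+\dots+y_{i_s}=y_{j_1}+\dots+y_{j_t}$ (ordinary addition). $A$ has the Augmentation property for the binary rank if for all binary column vectors $x_1,\dots,x_t$ with $R_{binary}(A|x_i)=R_{binary}(A)$ for all $i$, also $R_{binary}(A|x_1,\dots,x_t)=R_{binary}(A)$, where $(A|x_1,\dots,x_t)$ is $A$ with these columns appended. *)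

theory Defs
  imports Main
begin

text \<open>Matrices are functions nat => nat => nat, used only on the index range
  i < n (rows), j < m (columns); arithmetic is ordinary arithmetic on nat.
  Column vectors of length n are lists of length n.\<close>

definition binmat :: "nat \<Rightarrow> nat \<Rightarrow> (nat \<Rightarrow> nat \<Rightarrow> nat) \<Rightarrow> bool" where
  "binmat n m A \<longleftrightarrow> (\<forall>i<n. \<forall>j<m. A i j \<in> {0,1})"

definition is_bdecomp ::
  "nat \<Rightarrow> nat \<Rightarrow> (nat \<Rightarrow> nat \<Rightarrow> nat) \<Rightarrow> nat \<Rightarrow> (nat \<Rightarrow> nat \<Rightarrow> nat) \<Rightarrow> (nat \<Rightarrow> nat \<Rightarrow> nat) \<Rightarrow> bool" where
  "is_bdecomp n m A k U V \<longleftrightarrow> binmat n k U \<and> binmat k m V \<and>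
     (\<forall>i<n. \<forall>j<m. A i j = (\<Sum>l<k. U i l * V l j))"

definition brank :: "nat \<Rightarrow> nat \<Rightarrow> (nat \<Rightarrow> nat \<Rightarrow> nat) \<Rightarrow> nat" where
  "brank n m A = (LEAST k. \<exists>U V. is_bdecomp n m A k U V)"

definition optimal_bdecomp ::
  "nat \<Rightarrow> nat \<Rightarrow> (nat \<Rightarrow> nat \<Rightarrow> nat) \<Rightarrow> nat \<Rightarrow> (nat \<Rightarrow> nat \<Rightarrow> nat) \<Rightarrow> (nat \<Rightarrow> nat \<Rightarrow> nat) \<Rightarrow> bool" where
  "optimal_bdecomp n m A k U V \<longleftrightarrow> is_bdecomp n m A k U V \<and> k = brank n m A"

definition col :: "nat \<Rightarrow> (nat \<Rightarrow> nat \<Rightarrow> nat) \<Rightarrow> nat \<Rightarrow> nat list" where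
  "col n A j = map (\<lambda>i. A i j) [0..<n]"

definition binvec :: "nat \<Rightarrow> nat list \<Rightarrow> bool" where
  "binvec n x \<longleftrightarrow> length x = n \<and> set x \<subseteq> {0,1}"

definition bspans :: "nat \<Rightarrow> nat list set \<Rightarrow> nat list \<Rightarrow> bool" where
  "bspans n X y \<longleftrightarrow> (\<exists>c. (\<forall>x\<in>X. c x \<in> {0::nat,1}) \<and>
      (\<forall>i<n. y ! i = (\<Sum>x\<in>X. c x * x ! i)))"

definition spans_cols :: "nat \<Rightarrow> nat \<Rightarrow> (nat \<Rightarrow> nat \<Rightarrow> nat) \<Rightarrow> nat list set \<Rightarrow> bool" where
  "spans_cols n m A X \<longleftrightarrow> (\<forall>j<m. bspans n X (col n A j))"

definition binary_base :: "nat \<Rightarrow> nat \<Rightarrow> (nat \<Rightarrow> nat \<Rightarrow> nat) \<Rightarrow> nat list set \<Rightarrow> bool" where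
  "binary_base n m A B \<longleftrightarrow> finite B \<and> (\<forall>b\<in>B. binvec n b) \<and> spans_cols n m A B \<and>
     (\<forall>X. finite X \<and> (\<forall>x\<in>X. binvec n x) \<and> spans_cols n m A X \<longrightarrow> card B \<le> card X)"

definition unique_base_rows_sums :: "nat \<Rightarrow> nat \<Rightarrow> (nat \<Rightarrow> nat \<Rightarrow> nat) \<Rightarrow> bool" where
  "unique_base_rows_sums n m A \<longleftrightarrow>
     (\<forall>k X Y. optimal_bdecomp n m A k X Y \<longrightarrow>
        \<not> (\<exists>I J. I \<subseteq> {..<k} \<and> J \<subseteq> {..<k} \<and> I \<noteq> {} \<and> J \<noteq> {} \<and> I \<inter> J = {} \<and>
              (\<forall>j<m. (\<Sum>i\<in>I. Y i j) = (\<Sum>i\<in>J. Y i j))))"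

definition append_cols :: "nat \<Rightarrow> (nat \<Rightarrow> nat \<Rightarrow> nat) \<Rightarrow> nat list list \<Rightarrow> nat \<Rightarrow> nat \<Rightarrow> nat" where
  "append_cols m A xs = (\<lambda>i j. if j < m then A i j else (xs ! (j - m)) ! i)"

definition augmentation_property :: "nat \<Rightarrow> nat \<Rightarrow> (nat \<Rightarrow> nat \<Rightarrow> nat) \<Rightarrow> bool" where
  "augmentation_property n m A \<longleftrightarrow>
     (\<forall>xs. (\<forall>x\<in>set xs. binvec n x) \<and>
        (\<forall>x\<in>set xs. brank n (m + 1) (append_cols m A [x]) = brank n m A) \<longrightarrow>
        brank n (m + length xs) (append_cols m A xs) = brank n m A)"

end

theory Submission
  imports Defs
begin

text \<open>Let \<open>A = U V\<close> be optimal with the \<open>l\<close>-th row of \<open>V\<close> equal to row \<open>r l\<close> of \<open>A\<close>. For any other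
  optimal decomposition \<open>A = W Z\<close>, row \<open>i\<close> of \<open>A\<close> is both \<open>W\<^sub>i Z\<close> and \<open>U\<^sub>i V = (U\<^sub>i W\<^sub>r) Z\<close>, where
  \<open>W\<^sub>r\<close> consists of the rows \<open>r l\<close> of \<open>W\<close>. Both coefficient vectors are binary (rows of \<open>Z\<close> are
  nonzero and \<open>A\<close> is binary), so by the Unique base rows sums property they coincide: \<open>W = U W\<^sub>r\<close>.
  Hence every column \<open>w\<close> of \<open>W\<close> satisfies \<open>w = U w\<^sub>r\<close>, a binary combination of the columns
  of \<open>U\<close>. A binary base has exactly \<open>k\<close> elements, and both its vectors and the columns that do
  not raise the rank are columns of such a \<open>W\<close>, so they satisfy the same identity; in particular appending any of them keeps \<open>U\<close> as the left
  factor of a decomposition of size \<open>k\<close>.\<close>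

lemma brank_le: "is_bdecomp n m A k U V \<Longrightarrow> brank n m A \<le> k"
  unfolding brank_def by (rule Least_le) blast

lemma binmat_brank_attained:
  assumes "binmat n m A"
  shows "\<exists>U V. is_bdecomp n m A (brank n m A) U V"
proof -
  have "(\<Sum>l<m. A i l * (if l = j then 1 else 0)) = A i j" if "j < m" for i j
    using that by (simp add: if_distrib cong: if_cong)
  then have "is_bdecomp n m A m A (\<lambda>l j. if l = j then 1 else 0)"
    using assms unfolding is_bdecomp_def binmat_def by auto
  then have "\<exists>k U V. is_bdecomp n m A k U V" by blast
  then show ?thesis unfolding brank_def by (rule LeastI_ex)
qed

lemma binvec_nth: "binvec n x \<Longrightarrow> i < n \<Longrightarrow> x ! i \<in> {0, 1}"
  unfolding binvec_def using nth_mem by blast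

lemma col_nth: "i < n \<Longrightarrow> col n U l ! i = U i l"
  unfolding col_def by simp

lemma binmat_col_binvec: "binmat n k U \<Longrightarrow> l < k \<Longrightarrow> binvec n (col n U l)"
  unfolding binmat_def binvec_def col_def by fastforce

lemma binmat_append_cols:
  assumes "binmat n m A" and "\<forall>x\<in>set xs. binvec n x"
  shows "binmat n (m + length xs) (append_cols m A xs)"
  unfolding binmat_def append_cols_def
proof (intro allI impI)
  fix i j assume i: "i < n" and j: "j < m + length xs"
  show "(if j < m then A i j else xs ! (j - m) ! i) \<in> {0, 1}"
  proof (cases "j < m")
    case False
    then have "binvec n (xs ! (j - m))" using assms(2) j by simp
    then show ?thesis using False binvec_nth[OF _ i] by simp
  qed (use assms(1) i in \<open>auto simp: binmat_def\<close>)
qed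

lemma is_bdecomp_restrict_cols:
  assumes "is_bdecomp n m' M k W Z" and "m \<le> m'" and "\<forall>i<n. \<forall>j<m. A i j = M i j"
  shows "is_bdecomp n m A k W Z"
  using assms unfolding is_bdecomp_def binmat_def by auto

lemma brank_mono_cols:
  assumes "binmat n m' M" and "m \<le> m'" and "\<forall>i<n. \<forall>j<m. A i j = M i j"
  shows "brank n m A \<le> brank n m' M"
proof -
  obtain W Z where "is_bdecomp n m' M (brank n m' M) W Z"
    using binmat_brank_attained[OF assms(1)] by blast
  then have "is_bdecomp n m A (brank n m' M) W Z"
    using assms(2,3) by (rule is_bdecomp_restrict_cols)
  then show ?thesis by (rule brank_le)
qed

lemma bij_betw_skip_index:
  fixes p k :: nat
  assumes "p < k"
  shows "bij_betw (\<lambda>l. if l < p then l else Suc l) {..<k-1} ({..<k} - {p})"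
  by (rule bij_betw_byWitness[where f' = "\<lambda>x. if x < p then x else x - 1"]) (use assms in auto)

text \<open>Deleting a zero row of \<open>Z\<close> together with the matching column of \<open>W\<close> would give a shorter
  decomposition.\<close>

lemma optimal_bdecomp_row_nonzero:
  assumes opt: "optimal_bdecomp n m A k W Z" and p: "p < k"
  shows "\<exists>j<m. Z p j \<noteq> 0"
proof (rule ccontr)
  assume "\<not> (\<exists>j<m. Z p j \<noteq> 0)"
  then have zero: "\<forall>j<m. Z p j = 0" by auto
  define h where "h l = (if l < p then l else Suc l)" for l
  have bij: "bij_betw h {..<k-1} ({..<k} - {p})"
    unfolding h_def using p by (rule bij_betw_skip_index)
  have "is_bdecomp n m A (k-1) (\<lambda>i l. W i (h l)) (\<lambda>l j. Z (h l) j)"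
    unfolding is_bdecomp_def
  proof (intro conjI allI impI)
    have "h l < k" if "l < k - 1" for l using that unfolding h_def by auto
    then show "binmat n (k-1) (\<lambda>i l. W i (h l))" "binmat (k-1) m (\<lambda>l j. Z (h l) j)"
      using opt unfolding optimal_bdecomp_def is_bdecomp_def binmat_def by auto
    fix i j assume i: "i < n" and j: "j < m"
    have "A i j = (\<Sum>l<k. W i l * Z l j)"
      using opt i j unfolding optimal_bdecomp_def is_bdecomp_def by auto
    also have "\<dots> = (\<Sum>l\<in>{..<k} - {p}. W i l * Z l j)"
      using p zero j by (simp add: sum.remove[of "{..<k}" p])
    also have "\<dots> = (\<Sum>l<k-1. W i (h l) * Z (h l) j)"
      using sum.reindex_bij_betw[OF bij, of "\<lambda>l. W i l * Z l j"] by simp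
    finally show "A i j = (\<Sum>l<k-1. W i (h l) * Z (h l) j)" .
  qed
  then have "brank n m A \<le> k - 1" by (rule brank_le)
  moreover have "k = brank n m A" using opt unfolding optimal_bdecomp_def by simp
  ultimately show False using p by linarith
qed

lemma optimal_bdecomp_coeff_le_1:
  assumes opt: "optimal_bdecomp n m A k W Z"
    and le: "\<forall>j<m. (\<Sum>q<k. c q * Z q j) \<le> 1" and p: "p < k"
  shows "c p \<le> 1"
proof -
  obtain j where j: "j < m" "Z p j \<noteq> 0" using optimal_bdecomp_row_nonzero[OF opt p] by blast
  have "c p \<le> c p * Z p j" using j by simp
  also have "\<dots> \<le> (\<Sum>q<k. c q * Z q j)" using p by (intro member_le_sum) auto
  also have "\<dots> \<le> 1" using le j by blast
  finally show ?thesis .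
qed

lemma sum_binary_coeffs_support:
  fixes k :: nat
  assumes "\<forall>p<k. c p \<le> (1::nat)"
  shows "(\<Sum>p<k. c p * z p) = (\<Sum>p\<in>{p. p < k \<and> c p = 1}. z p)"
proof -
  have "(\<Sum>p<k. c p * z p) = (\<Sum>p<k. if c p = 1 then z p else 0)"
    using assms by (intro sum.cong) (auto simp: le_Suc_eq)
  also have "\<dots> = (\<Sum>p\<in>{p \<in> {..<k}. c p = 1}. z p)"
    by (rule sum.inter_filter[symmetric]) simp
  finally show ?thesis by simp
qed

lemma unique_base_rows_sums_coeffs_eq:
  assumes ub: "unique_base_rows_sums n m A" and opt: "optimal_bdecomp n m A k W Z"
    and a: "\<forall>p<k. a p \<le> 1" and c: "\<forall>p<k. c p \<le> 1"
    and eq: "\<forall>j<m. (\<Sum>p<k. a p * Z p j) = (\<Sum>p<k. c p * Z p j)"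
    and p: "p < k"
  shows "a p = c p"
proof -
  define Sa where "Sa = {p. p < k \<and> a p = 1}"
  define Sc where "Sc = {p. p < k \<and> c p = 1}"
  have fin: "finite Sa" "finite Sc" unfolding Sa_def Sc_def by auto
  have diff_eq: "(\<Sum>q\<in>Sa - Sc. Z q j) = (\<Sum>q\<in>Sc - Sa. Z q j)" if j: "j < m" for j
  proof -
    have "(\<Sum>q\<in>Sa \<inter> Sc. Z q j) + (\<Sum>q\<in>Sa - Sc. Z q j) = (\<Sum>q\<in>Sa. Z q j)"
      using fin by (simp add: sum.Int_Diff[symmetric])
    also have "\<dots> = (\<Sum>q<k. a q * Z q j)" unfolding Sa_def by (rule sum_binary_coeffs_support[OF a, symmetric])
    also have "\<dots> = (\<Sum>q<k. c q * Z q j)" using eq j by blast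
    also have "\<dots> = (\<Sum>q\<in>Sc. Z q j)" unfolding Sc_def by (rule sum_binary_coeffs_support[OF c])
    also have "\<dots> = (\<Sum>q\<in>Sa \<inter> Sc. Z q j) + (\<Sum>q\<in>Sc - Sa. Z q j)"
      using sum.Int_Diff[OF fin(2), of _ Sa] by (metis Int_commute)
    finally show ?thesis by simp
  qed
  have no_zero_sum: "X = {}" if sub: "X \<subseteq> {..<k}" and zero: "\<forall>j<m. (\<Sum>q\<in>X. Z q j) = 0" for X
  proof (rule ccontr)
    assume "X \<noteq> {}"
    then obtain q where q: "q \<in> X" by blast
    then obtain j where "j < m" "Z q j \<noteq> 0" using optimal_bdecomp_row_nonzero[OF opt] sub by blast
    moreover have "finite X" using sub finite_subset by blast
    ultimately show False using zero q by simp
  qed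
  have "\<not> (\<exists>I J. I \<subseteq> {..<k} \<and> J \<subseteq> {..<k} \<and> I \<noteq> {} \<and> J \<noteq> {} \<and> I \<inter> J = {} \<and>
      (\<forall>j<m. (\<Sum>i\<in>I. Z i j) = (\<Sum>i\<in>J. Z i j)))"
    using ub opt unfolding unique_base_rows_sums_def by blast
  moreover have "Sa - Sc \<subseteq> {..<k}" "Sc - Sa \<subseteq> {..<k}" "(Sa - Sc) \<inter> (Sc - Sa) = {}"
    unfolding Sa_def Sc_def by auto
  ultimately have "Sa - Sc = {} \<or> Sc - Sa = {}" using diff_eq by blast
  then have "Sa - Sc = {} \<and> Sc - Sa = {}"
  proof
    assume "Sa - Sc = {}"
    then have "\<forall>j<m. (\<Sum>q\<in>Sc - Sa. Z q j) = 0" using diff_eq by (metis sum.empty)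
    then show ?thesis using no_zero_sum \<open>Sa - Sc = {}\<close> \<open>Sc - Sa \<subseteq> {..<k}\<close> by blast
  next
    assume "Sc - Sa = {}"
    then have "\<forall>j<m. (\<Sum>q\<in>Sa - Sc. Z q j) = 0" using diff_eq by (metis sum.empty)
    then show ?thesis using no_zero_sum \<open>Sc - Sa = {}\<close> \<open>Sa - Sc \<subseteq> {..<k}\<close> by blast
  qed
  then have "a p = 1 \<longleftrightarrow> c p = 1" using p unfolding Sa_def Sc_def by blast
  moreover have "a p \<le> 1" "c p \<le> 1" using a c p by auto
  ultimately show ?thesis by linarith
qed

lemma bspans_cols_of_binary_combination:
  assumes d: "\<forall>l<k. d l \<le> 1" and y: "\<forall>i<n. y ! i = (\<Sum>l<k. d l * U i l)"
    and y_le: "\<forall>i<n. y ! i \<le> 1"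
  shows "bspans n {col n U l | l. l < k} y"
proof -
  \<comment> \<open>\<open>U\<close> may have equal columns; \<open>y \<le> 1\<close> rules out selecting two equal nonzero ones.\<close>
  define S where "S = {l. l < k \<and> d l = 1 \<and> (\<exists>i<n. U i l \<noteq> 0)}"
  define g where "g = col n U"
  have cols: "{col n U l | l. l < k} = g ` {..<k}" unfolding g_def by auto
  have inj: "inj_on g S"
  proof (rule inj_onI, rule ccontr)
    fix l l' assume l: "l \<in> S" and l': "l' \<in> S" and eq: "g l = g l'" and ne: "l \<noteq> l'"
    obtain i where i: "i < n" "U i l \<noteq> 0" using l S_def by auto
    have "U i l' = U i l" using eq i col_nth unfolding g_def by metis
    have "(\<Sum>q\<in>{l, l'}. d q * U i q) \<le> (\<Sum>q<k. d q * U i q)"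
      using l l' S_def by (intro sum_mono2) auto
    also have "\<dots> \<le> 1" using y y_le i by simp
    finally show False using ne \<open>U i l' = U i l\<close> l l' i S_def by auto
  qed
  define c where "c x = (if x \<in> g ` S then 1 else 0::nat)" for x
  show ?thesis unfolding bspans_def
  proof (intro exI[of _ c] conjI allI impI ballI)
    show "\<And>x. c x \<in> {0, 1}" unfolding c_def by auto
    fix i assume i: "i < n"
    have "g ` S \<subseteq> g ` {..<k}" unfolding S_def by auto
    then have "(\<Sum>x\<in>{col n U l | l. l < k}. c x * x ! i) = (\<Sum>x\<in>g ` S. x ! i)"
      unfolding cols by (intro sum.mono_neutral_cong_right) (auto simp: c_def)
    also have "\<dots> = (\<Sum>l\<in>S. d l * U i l)"
      using inj i by (simp add: sum.reindex g_def S_def col_nth)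
    also have "\<dots> = (\<Sum>l<k. d l * U i l)"
    proof (rule sum.mono_neutral_left)
      show "\<forall>l\<in>{..<k} - S. d l * U i l = 0"
        using d i unfolding S_def by (auto simp: le_Suc_eq)
    qed (auto simp: S_def)
    finally show "y ! i = (\<Sum>x\<in>{col n U l | l. l < k}. c x * x ! i)" using y i by simp
  qed
qed

lemma bdecomp_of_spanning_set:
  assumes vecs: "\<forall>b\<in>B. binvec n b" and spans: "spans_cols n m A B" and f: "bij_betw f {..<N} B"
  shows "\<exists>Z. is_bdecomp n m A N (\<lambda>i p. f p ! i) Z"
proof -
  obtain C where C: "\<forall>j<m. (\<forall>x\<in>B. C j x \<in> {0, 1}) \<and> (\<forall>i<n. col n A j ! i = (\<Sum>x\<in>B. C j x * x ! i))"
    using spans unfolding spans_cols_def bspans_def by metis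
  have fB: "f p \<in> B" if "p < N" for p using f that unfolding bij_betw_def by auto
  have "is_bdecomp n m A N (\<lambda>i p. f p ! i) (\<lambda>p j. C j (f p))"
    unfolding is_bdecomp_def
  proof (intro conjI allI impI)
    show "binmat n N (\<lambda>i p. f p ! i)"
      using vecs fB binvec_nth unfolding binmat_def by blast
    show "binmat N m (\<lambda>p j. C j (f p))" using C fB unfolding binmat_def by auto
    fix i j assume i: "i < n" and j: "j < m"
    have "A i j = (\<Sum>x\<in>B. C j x * x ! i)" using C i j by (simp add: col_nth)
    also have "\<dots> = (\<Sum>p<N. f p ! i * C j (f p))"
      using sum.reindex_bij_betw[OF f, of "\<lambda>x. C j x * x ! i"] by (simp add: mult.commute)
    finally show "A i j = (\<Sum>p<N. f p ! i * C j (f p))" .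
  qed
  then show ?thesis by blast
qed

locale base_rows_decomp =
  fixes n m :: nat and A :: "nat \<Rightarrow> nat \<Rightarrow> nat" and k :: nat and U V :: "nat \<Rightarrow> nat \<Rightarrow> nat"
    and r :: "nat \<Rightarrow> nat"
  assumes binary: "binmat n m A"
    and optimal: "optimal_bdecomp n m A k U V"
    and base_row: "\<And>l. l < k \<Longrightarrow> r l < n"
    and V_base_row: "\<And>l j. l < k \<Longrightarrow> j < m \<Longrightarrow> V l j = A (r l) j"
    and unique_sums: "unique_base_rows_sums n m A"
begin

lemma UV_bdecomp: "is_bdecomp n m A k U V" and k_eq_brank: "k = brank n m A"
  using optimal unfolding optimal_bdecomp_def by auto

lemma left_factor_through_base_rows:
  assumes WZ: "is_bdecomp n m A k W Z" and i: "i < n" and p: "p < k"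
  shows "W i p = (\<Sum>l<k. U i l * W (r l) p)"
proof -
  have opt: "optimal_bdecomp n m A k W Z" using WZ k_eq_brank unfolding optimal_bdecomp_def by simp
  define c where "c p = (\<Sum>l<k. U i l * W (r l) p)" for p
  have row_i: "A i j = (\<Sum>p<k. c p * Z p j)" if j: "j < m" for j
  proof -
    have "A i j = (\<Sum>l<k. U i l * V l j)" using UV_bdecomp i j unfolding is_bdecomp_def by simp
    also have "\<dots> = (\<Sum>l<k. U i l * (\<Sum>p<k. W (r l) p * Z p j))"
      using WZ j base_row V_base_row unfolding is_bdecomp_def by (intro sum.cong) auto
    also have "\<dots> = (\<Sum>l<k. \<Sum>p<k. U i l * W (r l) p * Z p j)"
      by (simp add: sum_distrib_left mult.assoc)
    also have "\<dots> = (\<Sum>p<k. \<Sum>l<k. U i l * W (r l) p * Z p j)" by (rule sum.swap)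
    also have "\<dots> = (\<Sum>p<k. c p * Z p j)" unfolding c_def by (simp add: sum_distrib_right)
    finally show ?thesis .
  qed
  show ?thesis unfolding c_def[symmetric]
  proof (rule unique_base_rows_sums_coeffs_eq[OF unique_sums opt _ _ _ p])
    show "\<forall>p<k. W i p \<le> 1" using WZ i unfolding is_bdecomp_def binmat_def by fastforce
    show "\<forall>j<m. (\<Sum>p<k. W i p * Z p j) = (\<Sum>p<k. c p * Z p j)"
      using WZ i row_i unfolding is_bdecomp_def by simp
    have "\<forall>j<m. (\<Sum>q<k. c q * Z q j) \<le> 1"
      using binary i row_i unfolding binmat_def by (metis insert_iff le_eq_less_or_eq less_one singletonD)
    then show "\<forall>p<k. c p \<le> 1" using optimal_bdecomp_coeff_le_1[OF opt] by blast
  qed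
qed

lemma bspans_if_determined_by_base_rows:
  assumes y: "binvec n y" and rep: "\<forall>i<n. y ! i = (\<Sum>l<k. U i l * y ! (r l))"
  shows "bspans n {col n U l | l. l < k} y"
proof (rule bspans_cols_of_binary_combination[where d = "\<lambda>l. y ! (r l)"])
  show "\<forall>l<k. y ! (r l) \<le> 1" "\<forall>i<n. y ! i \<le> 1"
    using binvec_nth[OF y] base_row by fastforce+
  show "\<forall>i<n. y ! i = (\<Sum>l<k. y ! (r l) * U i l)" using rep by (simp add: mult.commute)
qed

lemma extension_determined_by_base_rows:
  assumes M: "is_bdecomp n m' M k W Z" and "m \<le> m'" and "\<forall>i<n. \<forall>j<m. A i j = M i j"
    and i: "i < n" and j: "j < m'"
  shows "M i j = (\<Sum>l<k. U i l * M (r l) j)"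
proof -
  have WZ: "is_bdecomp n m A k W Z" using M assms(2,3) by (rule is_bdecomp_restrict_cols)
  have "M i j = (\<Sum>p<k. W i p * Z p j)" using M i j unfolding is_bdecomp_def by simp
  also have "\<dots> = (\<Sum>p<k. \<Sum>l<k. U i l * W (r l) p * Z p j)"
    using left_factor_through_base_rows[OF WZ i] by (simp add: sum_distrib_right)
  also have "\<dots> = (\<Sum>l<k. \<Sum>p<k. U i l * W (r l) p * Z p j)" by (rule sum.swap)
  also have "\<dots> = (\<Sum>l<k. U i l * M (r l) j)"
    using M base_row j unfolding is_bdecomp_def by (simp add: sum_distrib_left mult.assoc)
  finally show ?thesis .
qed

lemma U_cols_span_A: "spans_cols n m A {col n U l | l. l < k}"
  unfolding spans_cols_def
proof (intro allI impI)
  fix j assume j: "j < m"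
  show "bspans n {col n U l | l. l < k} (col n A j)"
  proof (rule bspans_cols_of_binary_combination[where d = "\<lambda>l. V l j"])
    show "\<forall>l<k. V l j \<le> 1" using UV_bdecomp j unfolding is_bdecomp_def binmat_def by fastforce
    show "\<forall>i<n. col n A j ! i = (\<Sum>l<k. V l j * U i l)"
      using UV_bdecomp j unfolding is_bdecomp_def by (auto simp: col_nth mult.commute)
    show "\<forall>i<n. col n A j ! i \<le> 1" using binary j unfolding binmat_def by (fastforce simp: col_nth)
  qed
qed

lemma binary_base_card:
  assumes B: "binary_base n m A B"
  shows "card B = k"
proof (rule antisym)
  let ?X = "{col n U l | l. l < k}"
  have X: "?X = col n U ` {..<k}" by auto
  have "\<forall>x\<in>?X. binvec n x" using UV_bdecomp binmat_col_binvec unfolding is_bdecomp_def by blast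
  moreover have "finite ?X" unfolding X by simp
  ultimately have "card B \<le> card ?X"
    using B U_cols_span_A unfolding binary_base_def by blast
  also have "\<dots> \<le> k" unfolding X using card_image_le[of "{..<k}"] by simp
  finally show "card B \<le> k" .
  obtain f where f: "bij_betw f {..<card B} B"
    using B ex_bij_betw_nat_finite[of B] unfolding binary_base_def lessThan_atLeast0 by blast
  obtain Z where "is_bdecomp n m A (card B) (\<lambda>i p. f p ! i) Z"
    using bdecomp_of_spanning_set[where n = n and m = m and A = A, OF _ _ f] B
    unfolding binary_base_def by blast
  then have "brank n m A \<le> card B" by (rule brank_le)
  then show "k \<le> card B" using k_eq_brank by simp
qed

lemma binary_base_spanned:
  assumes B: "binary_base n m A B" and b: "b \<in> B"
  shows "bspans n {col n U l | l. l < k} b"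
proof -
  obtain f where f: "bij_betw f {..<k} B"
    using B ex_bij_betw_nat_finite[of B] binary_base_card[OF B]
    unfolding binary_base_def lessThan_atLeast0 by blast
  obtain Z where WZ: "is_bdecomp n m A k (\<lambda>i p. f p ! i) Z"
    using bdecomp_of_spanning_set[where n = n and m = m and A = A, OF _ _ f] B
    unfolding binary_base_def by blast
  obtain p where p: "p < k" "b = f p" using f b unfolding bij_betw_def by auto
  show ?thesis
  proof (rule bspans_if_determined_by_base_rows)
    show "binvec n b" using B b unfolding binary_base_def by blast
    show "\<forall>i<n. b ! i = (\<Sum>l<k. U i l * b ! (r l))"
      using left_factor_through_base_rows[OF WZ] p by simp
  qed
qed

lemma rank_preserving_column_determined_by_base_rows:
  assumes x: "binvec n x" and rank: "brank n (m + 1) (append_cols m A [x]) = k" and i: "i < n"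
  shows "x ! i = (\<Sum>l<k. U i l * x ! (r l))"
proof -
  let ?M = "append_cols m A [x]"
  have "binmat n (m + 1) ?M" using binmat_append_cols[OF binary, of "[x]"] x by simp
  then obtain W Z where "is_bdecomp n (m + 1) ?M k W Z" using binmat_brank_attained rank by metis
  then have "?M i m = (\<Sum>l<k. U i l * ?M (r l) m)"
    by (rule extension_determined_by_base_rows) (use i in \<open>auto simp: append_cols_def\<close>)
  then show ?thesis by (simp add: append_cols_def)
qed

lemma augmentation: "augmentation_property n m A"
  unfolding augmentation_property_def
proof (intro allI impI)
  fix xs assume "(\<forall>x\<in>set xs. binvec n x) \<and>
    (\<forall>x\<in>set xs. brank n (m + 1) (append_cols m A [x]) = brank n m A)"
  then have vecs: "\<forall>x\<in>set xs. binvec n x"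
    and ranks: "\<forall>x\<in>set xs. brank n (m + 1) (append_cols m A [x]) = k"
    using k_eq_brank by auto
  let ?M = "append_cols m A xs"
  have M: "binmat n (m + length xs) ?M" using binmat_append_cols[OF binary vecs] .
  have "is_bdecomp n (m + length xs) ?M k U (\<lambda>l j. ?M (r l) j)"
    unfolding is_bdecomp_def
  proof (intro conjI allI impI)
    show "binmat n k U" using UV_bdecomp unfolding is_bdecomp_def by blast
    show "binmat k (m + length xs) (\<lambda>l j. ?M (r l) j)"
      using M base_row unfolding binmat_def by blast
    fix i j assume i: "i < n" and j: "j < m + length xs"
    show "?M i j = (\<Sum>l<k. U i l * ?M (r l) j)"
    proof (cases "j < m")
      case True
      have "A i j = (\<Sum>l<k. U i l * V l j)" using UV_bdecomp i True unfolding is_bdecomp_def by blast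
      also have "\<dots> = (\<Sum>l<k. U i l * A (r l) j)" using V_base_row True by simp
      finally show ?thesis using True by (simp add: append_cols_def)
    next
      case False
      then have "xs ! (j - m) \<in> set xs" using j by simp
      then show ?thesis
        using rank_preserving_column_determined_by_base_rows vecs ranks i False by (simp add: append_cols_def)
    qed
  qed
  then have "brank n (m + length xs) ?M \<le> k" by (rule brank_le)
  moreover have "k \<le> brank n (m + length xs) ?M"
    using brank_mono_cols[OF M] k_eq_brank by (simp add: append_cols_def)
  ultimately show "brank n (m + length xs) ?M = brank n m A" using k_eq_brank by simp
qed

end

theorem theorem2:
  fixes n m k :: nat and A U V :: "nat \<Rightarrow> nat \<Rightarrow> nat"
  assumes "binmat n m A"
    and "optimal_bdecomp n m A k U V"
    and "\<forall>l<k. \<exists>i<n. \<forall>j<m. V l j = A i j"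
    and "unique_base_rows_sums n m A"
  shows "(\<forall>B. binary_base n m A B \<longrightarrow> (\<forall>b\<in>B. bspans n {col n U l | l. l < k} b))
         \<and> augmentation_property n m A"
proof -
  obtain r where "\<forall>l<k. r l < n \<and> (\<forall>j<m. V l j = A (r l) j)" using assms(3) by metis
  then interpret base_rows_decomp n m A k U V r
    using assms(1,2,4) by unfold_locales auto
  show ?thesis using binary_base_spanned augmentation by blast
qed

end
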